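(* Fix an integer $p\ge 1$ and a real vector $\psi=(\psi_{w};\ 0<w\le \mathbf{1})$ indexed by the nonzero binary vectors $w\in\{0,1\}^p$, and for $v\in\{0,1\}^p$ let $\mathrm{OR}_{v}=\exp\big(\sum_{0<w\le v}\psi_w\big)$. Let $J\subset\{1,\dots,p\}$, $K=\{1,\dots,p\}\setminus J$, write $v=(v_J,v_K)$, and fix $v_K$. Define $\Delta^{(w,v_K)}\mathrm{OR}=\sum_{0\le u\le w}(-1)^{|w-u|}\mathrm{OR}_{(u,v_K)}$ for $w\in\{0,1\}^{|J|}$, and for $v_J\in\{0,1\}^{|J|}$ and $0\le i\le |v_J|$ define the prediction $$\mathrm{OR}_{(v_J,v_K),i}=\sum_{0\le w\le v_J,\ |w|\le i}\Delta^{(w,v_K)}\mathrm{OR}.$$ Then, if $0\le i<|v_J|$, $$\mathrm{OR}_{(v_J,v_K),i}=\sum_{0\le w\le v_J,\ |w|\le i}\mathrm{OR}_{(w,v_K)}\,(-1)^{i-|w|}\binom{|v_J|-1-|w|}{i-|w|},$$ and if $i=|v_J|$, then $\mathrm{OR}_{(v_J,v_K),i}=\mathrm{OR}_{(v_J,v_K)}$.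
   Context: Inequalities between binary vectors are componentwise; for a binary vector $w$, $|w|=\sum_j w_j$; $\mathbf 0$, $\mathbf 1$ are the all-zeros and all-ones vectors. Coordinates are ordered so that the factors in $J$ come first, $v=(v_J,v_K)$. Sums over $w$ range over binary vectors $w\in\{0,1\}^{|J|}$. *)

theory Defs
  imports Complex_Main
begin

text \<open>Binary vectors in {0,1}^p are identified with subsets of {1..p}
  (a vector is identified with its support). Then componentwise order is
  set inclusion, |w| is card w, the zero vector is the empty set, and the
  concatenation (v_J, v_K) with v_J supported in J and v_K in K is the
  disjoint union v_J \<union> v_K.\<close>

definition OR :: "(nat set \<Rightarrow> real) \<Rightarrow> nat set \<Rightarrow> real" where
  "OR \<psi> v = exp (\<Sum>w \<in> {w. w \<subseteq> v \<and> w \<noteq> {}}. \<psi> w)"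

definition DeltaOR :: "(nat set \<Rightarrow> real) \<Rightarrow> nat set \<Rightarrow> nat set \<Rightarrow> real" where
  "DeltaOR \<psi> w vK = (\<Sum>u \<in> Pow w. (-1) ^ (card w - card u) * OR \<psi> (u \<union> vK))"

definition ORpred :: "(nat set \<Rightarrow> real) \<Rightarrow> nat set \<Rightarrow> nat set \<Rightarrow> nat \<Rightarrow> real" where
  "ORpred \<psi> vJ vK i = (\<Sum>w \<in> {w. w \<subseteq> vJ \<and> card w \<le> i}. DeltaOR \<psi> w vK)"

end

theory Submission
  imports Defs
begin

text \<open>Both claims concern a truncated sum of finite differences,
  sum over w \<subseteq> V with |w| \<le> i of sum over u \<subseteq> w of (-1)^(|w|-|u|) f(u).
  Exchanging the two sums, the coefficient of f(u) is a signed count of the sets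
  u \<subseteq> w \<subseteq> V with |w| \<le> i, i.e. a partial alternating sum of binomial coefficients,
  sum over k \<le> m of (-1)^k C(N,k) = (-1)^m C(N-1,m) with N = |V|-|u| and m = i-|u|.
  For i = |V| this coefficient vanishes unless u = V: Moebius inversion on the Boolean lattice.\<close>

lemma sum_alternating_choose_atMost:
  assumes "N \<ge> 1"
  shows "(\<Sum>k\<le>m. (-1) ^ k * real (N choose k)) = (-1) ^ m * real (N - 1 choose m)"
  using gbinomial_sum_lower_neg[of "real N" m] assms
  by (simp add: binomial_gbinomial of_nat_diff mult.commute)

lemma sum_sign_subsets_card_le:
  assumes "finite A"
  shows "(\<Sum>S | S \<subseteq> A \<and> card S \<le> j. (-1::real) ^ card S)
       = (\<Sum>k\<le>j. (-1) ^ k * real (card A choose k))"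
proof -
  let ?F = "{S. S \<subseteq> A \<and> card S \<le> j}"
  have "finite ?F"
    using assms by (auto intro: finite_subset[of _ "Pow A"])
  then have "(\<Sum>S\<in>?F. (-1::real) ^ card S) = (\<Sum>k\<le>j. \<Sum>S\<in>{S \<in> ?F. card S = k}. (-1) ^ card S)"
    by (intro sum.group[symmetric]) auto
  also have "\<dots> = (\<Sum>k\<le>j. (-1) ^ k * real (card {S. S \<subseteq> A \<and> card S = k}))"
    by (intro sum.cong) (auto intro: arg_cong[where f = card])
  finally show ?thesis
    by (simp add: n_subsets assms)
qed

text \<open>With truncated subtraction the right-hand side is also correct for \<open>u = V\<close>,
  where it equals \<open>0 choose 0 = 1\<close>.\<close>

lemma sum_sign_supersets_card_le:
  assumes "finite V" "u \<subseteq> V" "card u \<le> i" "i \<le> card V"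
  shows "(\<Sum>w | u \<subseteq> w \<and> w \<subseteq> V \<and> card w \<le> i. (-1::real) ^ (card w - card u))
       = (-1) ^ (i - card u) * real (card V - 1 - card u choose (i - card u))"
proof -
  have fin: "finite u" "\<And>S. S \<subseteq> V \<Longrightarrow> finite S"
    using assms finite_subset by blast+
  have card_Un: "card (u \<union> S) = card u + card S" if "S \<subseteq> V - u" for S
    using that fin by (intro card_Un_disjoint) auto
  have card_Diff: "card (w - u) = card w - card u" if "u \<subseteq> w" "w \<subseteq> V" for w
    using that fin by (simp add: card_Diff_subset)
  have "(\<Sum>w | u \<subseteq> w \<and> w \<subseteq> V \<and> card w \<le> i. (-1::real) ^ (card w - card u))
      = (\<Sum>S | S \<subseteq> V - u \<and> card S \<le> i - card u. (-1) ^ card S)"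
  proof (rule sum.reindex_bij_witness[where j = "\<lambda>w. w - u" and i = "\<lambda>S. u \<union> S"])
    fix w assume w: "w \<in> {w. u \<subseteq> w \<and> w \<subseteq> V \<and> card w \<le> i}"
    then show "u \<union> (w - u) = w"
      by blast
    show "w - u \<in> {S. S \<subseteq> V - u \<and> card S \<le> i - card u}"
      using w card_Diff by auto
    show "(-1) ^ card (w - u) = (-1::real) ^ (card w - card u)"
      using w card_Diff by simp
  next
    fix S assume S: "S \<in> {S. S \<subseteq> V - u \<and> card S \<le> i - card u}"
    then show "u \<union> S - u = S"
      by blast
    show "u \<union> S \<in> {w. u \<subseteq> w \<and> w \<subseteq> V \<and> card w \<le> i}"
      using S card_Un assms(2,3) by auto
  qed
  also have "\<dots> = (\<Sum>k\<le>i - card u. (-1) ^ k * real (card V - card u choose k))"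
    using sum_sign_subsets_card_le[of "V - u"] card_Diff[of V] assms by simp
  also have "\<dots> = (-1) ^ (i - card u) * real (card V - 1 - card u choose (i - card u))"
  proof (cases "u = V")
    case True
    then show ?thesis using assms by simp
  next
    case False
    then have "card u < card V"
      using assms by (simp add: psubset_card_mono psubset_eq)
    then show ?thesis
      by (simp add: sum_alternating_choose_atMost diff_commute)
  qed
  finally show ?thesis .
qed

lemma sum_truncated_moebius:
  fixes f :: "'a set \<Rightarrow> real"
  assumes "finite V" "i \<le> card V"
  shows "(\<Sum>w | w \<subseteq> V \<and> card w \<le> i. \<Sum>u\<in>Pow w. (-1) ^ (card w - card u) * f u)
       = (\<Sum>u | u \<subseteq> V \<and> card u \<le> i.
            (-1) ^ (i - card u) * real (card V - 1 - card u choose (i - card u)) * f u)"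
proof -
  let ?A = "{w. w \<subseteq> V \<and> card w \<le> i}"
  have fin: "finite ?A"
    using assms by (auto intro: finite_subset[of _ "Pow V"])
  have Pow_eq: "Pow w = {u. u \<in> ?A \<and> u \<subseteq> w}" if "w \<in> ?A" for w
  proof -
    have "finite w" "w \<subseteq> V" "card w \<le> i"
      using that assms(1) finite_subset by auto
    then have "u \<in> ?A" if "u \<subseteq> w" for u
      using that card_mono[of w u] by auto
    then show ?thesis
      by blast
  qed
  have "(\<Sum>w\<in>?A. \<Sum>u\<in>Pow w. (-1) ^ (card w - card u) * f u)
      = (\<Sum>w\<in>?A. \<Sum>u | u \<in> ?A \<and> u \<subseteq> w. (-1) ^ (card w - card u) * f u)"
    by (intro sum.cong refl) (simp add: Pow_eq)
  also have "\<dots> = (\<Sum>u\<in>?A. \<Sum>w | w \<in> ?A \<and> u \<subseteq> w. (-1) ^ (card w - card u) * f u)"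
    by (rule sum.swap_restrict[OF fin fin])
  also have "\<dots> = (\<Sum>u\<in>?A. (\<Sum>w | u \<subseteq> w \<and> w \<subseteq> V \<and> card w \<le> i. (-1) ^ (card w - card u)) * f u)"
    by (simp add: sum_distrib_right conj_commute conj_left_commute)
  also have "\<dots> = (\<Sum>u\<in>?A. (-1) ^ (i - card u) * real (card V - 1 - card u choose (i - card u)) * f u)"
    using assms by (intro sum.cong refl) (simp add: sum_sign_supersets_card_le)
  finally show ?thesis .
qed

lemma sum_moebius_Pow:
  fixes f :: "'a set \<Rightarrow> real"
  assumes "finite V"
  shows "(\<Sum>w\<in>Pow V. \<Sum>u\<in>Pow w. (-1) ^ (card w - card u) * f u) = f V"
proof -
  have card_le: "card w \<le> card V" if "w \<subseteq> V" for w
    using assms that by (rule card_mono)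
  have vanish: "(card V - 1 - card u choose (card V - card u)) = 0" if "u \<subset> V" for u
    using assms that psubset_card_mono[of V u] by (intro binomial_eq_0) linarith
  have "Pow V = {w. w \<subseteq> V \<and> card w \<le> card V}"
    using card_le by auto
  then have "(\<Sum>w\<in>Pow V. \<Sum>u\<in>Pow w. (-1) ^ (card w - card u) * f u)
      = (\<Sum>u\<in>Pow V. (-1) ^ (card V - card u) * real (card V - 1 - card u choose (card V - card u)) * f u)"
    using sum_truncated_moebius[OF assms order_refl, of f] by simp
  also have "\<dots> = (\<Sum>u\<in>Pow V. if u = V then f V else 0)"
    using vanish by (intro sum.cong refl) (auto simp: psubset_eq)
  also have "\<dots> = f V"
    using assms by simp
  finally show ?thesis .
qed

theorem proposition1:
  fixes p :: nat and \<psi> :: "nat set \<Rightarrow> real" and J K vJ vK :: "nat set" and i :: nat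
  assumes "p \<ge> 1"
    and "J \<subseteq> {1..p}" and "K = {1..p} - J"
    and "vJ \<subseteq> J" and "vK \<subseteq> K"
    and "i \<le> card vJ"
  shows "(i < card vJ \<longrightarrow>
            ORpred \<psi> vJ vK i =
              (\<Sum>w \<in> {w. w \<subseteq> vJ \<and> card w \<le> i}.
                 OR \<psi> (w \<union> vK) * (-1) ^ (i - card w)
                 * real ((card vJ - 1 - card w) choose (i - card w))))
       \<and> (i = card vJ \<longrightarrow> ORpred \<psi> vJ vK i = OR \<psi> (vJ \<union> vK))"
proof -
  have fin: "finite vJ"
    using assms(2,4) by (meson finite_atLeastAtMost finite_subset subset_trans)
  let ?f = "\<lambda>u. OR \<psi> (u \<union> vK)"
  have ORpred_eq: "ORpred \<psi> vJ vK i
      = (\<Sum>w | w \<subseteq> vJ \<and> card w \<le> i. \<Sum>u\<in>Pow w. (-1) ^ (card w - card u) * ?f u)"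
    by (simp add: ORpred_def DeltaOR_def)
  show ?thesis
  proof (intro conjI impI)
    show "ORpred \<psi> vJ vK i =
            (\<Sum>w \<in> {w. w \<subseteq> vJ \<and> card w \<le> i}.
               OR \<psi> (w \<union> vK) * (-1) ^ (i - card w)
               * real ((card vJ - 1 - card w) choose (i - card w)))"
      unfolding ORpred_eq sum_truncated_moebius[OF fin assms(6)] by (simp add: ac_simps)
  next
    assume "i = card vJ"
    then have "{w. w \<subseteq> vJ \<and> card w \<le> i} = Pow vJ"
      using card_mono[OF fin] by auto
    then show "ORpred \<psi> vJ vK i = OR \<psi> (vJ \<union> vK)"
      unfolding ORpred_eq using sum_moebius_Pow[OF fin, of ?f] by simp
  qed
qed

end
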